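(* Suppose $\lambda_1>0$ and $\beta$ satisfies condition $(E)$. Let $\varphi$ be an entire function such that the composition operator $C_\varphi f=f\circ\varphi$ maps $\mathcal{H}(E,\beta)$ into itself and is bounded on $\mathcal{H}(E,\beta)$. Then $\varphi(z)=z+b$ for some $b\in\mathbb{C}$ with $\operatorname{Re}(b)\ge0$.
   Context: Fix a sequence $\Lambda=(\lambda_n)_{n\ge1}$ of real numbers with $0\le\lambda_1<\lambda_2<\cdots$ and $\lambda_n\to+\infty$, such that $\limsup_{n\to\infty}\frac{\log n}{\lambda_n}<+\infty$. For a sequence $\beta=(\beta_n)$ of positive reals, condition $(E)$ is: $\liminf_{n\to\infty}\frac{\log\beta_n}{\lambda_n}=+\infty$. Under $(E)$, $\mathcal{H}(E,\beta)$ denotes the Hilbert space of entire functions $f(z)=\sum_{n=1}^\infty a_ne^{-\lambda_nz}$ ($a_n\in\mathbb{C}$; the representation is unique) with norm $\|f\|=\big(\sum_{n=1}^\infty|a_n|^2\beta_n^2\big)^{1/2}<\infty$. *)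

theory Defs
  imports "HOL-Analysis.Analysis"
begin

text \<open>Indices are shifted: the paper's lambda_1, lambda_2, ... are Lam 0, Lam 1, ...\<close>

definition dirichlet_sum :: "(nat \<Rightarrow> real) \<Rightarrow> (nat \<Rightarrow> complex) \<Rightarrow> complex \<Rightarrow> complex" where
  "dirichlet_sum Lam a z = (\<Sum>n. a n * exp (- (of_real (Lam n)) * z))"

definition coeff_ok :: "(nat \<Rightarrow> real) \<Rightarrow> (nat \<Rightarrow> complex) \<Rightarrow> bool" where
  "coeff_ok beta a \<longleftrightarrow> summable (\<lambda>n. (cmod (a n))\<^sup>2 * (beta n)\<^sup>2)"

definition HE :: "(nat \<Rightarrow> real) \<Rightarrow> (nat \<Rightarrow> real) \<Rightarrow> (complex \<Rightarrow> complex) set" where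
  "HE Lam beta = {f. \<exists>a. coeff_ok beta a \<and> (\<forall>z. f z = dirichlet_sum Lam a z)}"

definition HE_coeffs :: "(nat \<Rightarrow> real) \<Rightarrow> (nat \<Rightarrow> real) \<Rightarrow> (complex \<Rightarrow> complex) \<Rightarrow> nat \<Rightarrow> complex" where
  "HE_coeffs Lam beta f = (THE a. coeff_ok beta a \<and> (\<forall>z. f z = dirichlet_sum Lam a z))"

definition HE_norm :: "(nat \<Rightarrow> real) \<Rightarrow> (nat \<Rightarrow> real) \<Rightarrow> (complex \<Rightarrow> complex) \<Rightarrow> real" where
  "HE_norm Lam beta f = sqrt (\<Sum>n. (cmod (HE_coeffs Lam beta f n))\<^sup>2 * (beta n)\<^sup>2)"

definition bounded_comp_op :: "(nat \<Rightarrow> real) \<Rightarrow> (nat \<Rightarrow> real) \<Rightarrow> (complex \<Rightarrow> complex) \<Rightarrow> bool" where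
  "bounded_comp_op Lam beta phi \<longleftrightarrow>
     (\<forall>f \<in> HE Lam beta. f \<circ> phi \<in> HE Lam beta) \<and>
     (\<exists>C. \<forall>f \<in> HE Lam beta. HE_norm Lam beta (f \<circ> phi) \<le> C * HE_norm Lam beta f)"

end

theory Submission
  imports Defs "HOL-Complex_Analysis.Complex_Analysis"
begin

text \<open>Condition (E) makes K x = (\<Sum>n. exp (-2 Lam n x) / beta n ^ 2) finite for every real x,
  and the Dirichlet series with coefficients exp (- Lam n * cnj u) / beta n ^ 2 is the reproducing
  kernel of the space at u: its squared norm and its value at u both equal K (Re u). (Computing
  norms needs uniqueness of the coefficients, which holds because on the real axis the first
  nonzero term of a Dirichlet series dominates as x tends to infinity.) Applying the
  bounded operator C_phi to the kernel at phi w gives K (Re (phi w)) \<le> C^2 K (Re w). Since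
  K (x - D) \<ge> exp (2 Lam 0 D) K x, this forces Re (phi w) \<ge> Re w - D for a fixed D, so
  1 / (phi w - w + D + 1) is a bounded entire function and Liouville's theorem yields phi z = z + b.
  Finally C_phi multiplies exp (- Lam k z) by exp (- Lam k b), so exp (- Lam k Re b) \<le> C for all k,
  which is only possible for Re b \<ge> 0 because Lam k tends to infinity.\<close>

lemma Cauchy_Schwarz_suminf:
  fixes u v :: "nat \<Rightarrow> real"
  assumes su: "summable (\<lambda>n. (u n)\<^sup>2)" and sv: "summable (\<lambda>n. (v n)\<^sup>2)"
    and u0: "\<And>n. u n \<ge> 0" and v0: "\<And>n. v n \<ge> 0"
  shows "summable (\<lambda>n. u n * v n)"
    and "(\<Sum>n. u n * v n) \<le> sqrt (\<Sum>n. (u n)\<^sup>2) * sqrt (\<Sum>n. (v n)\<^sup>2)"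
proof -
  have "norm (u n * v n) \<le> ((u n)\<^sup>2 + (v n)\<^sup>2) / 2" for n
    using u0[of n] v0[of n] sum_squares_bound[of "u n" "v n"]
    by (simp add: abs_mult power2_eq_square)
  then show s: "summable (\<lambda>n. u n * v n)"
    by (rule summable_comparison_test'[OF summable_divide[OF summable_add[OF su sv]]])
  show "(\<Sum>n. u n * v n) \<le> sqrt (\<Sum>n. (u n)\<^sup>2) * sqrt (\<Sum>n. (v n)\<^sup>2)"
  proof (rule suminf_le_const[OF s])
    fix N
    have "(\<Sum>n<N. u n * v n) = (\<Sum>n<N. \<bar>u n\<bar> * \<bar>v n\<bar>)" using u0 v0 by simp
    also have "\<dots> \<le> L2_set u {..<N} * L2_set v {..<N}" by (rule L2_set_mult_ineq)
    also have "\<dots> \<le> sqrt (\<Sum>n. (u n)\<^sup>2) * sqrt (\<Sum>n. (v n)\<^sup>2)"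
      unfolding L2_set_def
      by (intro mult_mono real_sqrt_le_mono sum_le_suminf su sv)
         (auto simp: sum_nonneg suminf_nonneg su)
    finally show "(\<Sum>n<N. u n * v n) \<le> sqrt (\<Sum>n. (u n)\<^sup>2) * sqrt (\<Sum>n. (v n)\<^sup>2)" .
  qed
qed

lemma entire_eq_translation_if_Re_bounded_below:
  fixes phi :: "complex \<Rightarrow> complex"
  assumes entire: "phi holomorphic_on UNIV" and lower: "\<And>w. Re w - D \<le> Re (phi w)"
  shows "\<exists>b. \<forall>z. phi z = z + b"
proof -
  define g where "g w = 1 / (phi w - w + of_real (D + 1))" for w
  have den: "1 \<le> Re (phi w - w + of_real (D + 1))" for w
    using lower[of w] by simp
  then have den_ne: "phi w - w + of_real (D + 1) \<noteq> 0" for w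
    by (metis zero_complex.simps(1) not_one_le_zero)
  have "g holomorphic_on UNIV"
    unfolding g_def by (intro holomorphic_intros entire) (use den_ne in auto)
  moreover have "norm (g w) \<le> 1" for w
    using order_trans[OF den complex_Re_le_cmod] by (simp add: g_def norm_divide divide_le_eq_1)
  then have "bounded (range g)"
    unfolding bounded_iff by blast
  ultimately have "g constant_on UNIV"
    by (rule Liouville_theorem)
  then obtain c where c: "\<And>w. g w = c"
    unfolding constant_on_def by blast
  have "phi z - z + of_real (D + 1) = 1 / g z" for z
    by (simp add: g_def)
  then have "phi z = z + (1 / c - of_real (D + 1))" for z
    by (simp add: c algebra_simps)
  then show ?thesis by blast
qed

lemma Re_nonneg_if_exp_bounded:
  fixes Lam :: "nat \<Rightarrow> real"
  assumes Lam_lim: "filterlim Lam at_top sequentially"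
    and bound: "\<And>k. exp (- Lam k * Re b) \<le> C"
  shows "Re b \<ge> 0"
proof (rule ccontr)
  assume "\<not> Re b \<ge> 0"
  then have "filterlim (\<lambda>k. exp (- Re b * Lam k)) at_top sequentially"
    by (intro filterlim_compose[OF exp_at_top] filterlim_tendsto_pos_mult_at_top[OF tendsto_const _ Lam_lim])
      simp
  then have "eventually (\<lambda>k. C + 1 \<le> exp (- Re b * Lam k)) sequentially"
    by (simp add: filterlim_at_top)
  then obtain k where "C + 1 \<le> exp (- Re b * Lam k)"
    by (auto simp: eventually_sequentially)
  with bound[of k] show False
    by (simp add: mult.commute)
qed

locale dirichlet_space =
  fixes Lam beta :: "nat \<Rightarrow> real"
  assumes Lam0_pos: "Lam 0 > 0"
    and Lam_mono: "strict_mono Lam"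
    and Lam_growth: "limsup (\<lambda>n. ereal (ln (real (Suc n)) / Lam n)) < \<infinity>"
    and beta_pos: "\<And>n. beta n > 0"
    and condE: "liminf (\<lambda>n. ereal (ln (beta n) / Lam n)) = \<infinity>"
begin

lemma Lam_ge_Lam0: "Lam 0 \<le> Lam n"
  using Lam_mono by (simp add: strict_mono_less_eq)

lemma Lam_pos: "Lam n > 0"
  using Lam0_pos Lam_ge_Lam0[of n] by linarith

definition K :: "real \<Rightarrow> real" where
  "K x = (\<Sum>n. exp (-2 * Lam n * x) / (beta n)\<^sup>2)"

text \<open>The growth bound on Lam and condition (E) together give (n + 1) exp (- Lam n x) \<le> beta n
  eventually, which bounds the terms by 1 / (n + 1)^2.\<close>
lemma summable_K_terms: "summable (\<lambda>n. exp (-2 * Lam n * x) / (beta n)\<^sup>2)"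
proof -
  obtain A where A: "\<And>n. ln (real (Suc n)) / Lam n \<le> A"
    using limsup_finite_then_bounded[OF Lam_growth] by blast
  have "ereal (A - x) < liminf (\<lambda>n. ereal (ln (beta n) / Lam n))"
    using condE by simp
  then have "eventually (\<lambda>n. ereal (A - x) < ereal (ln (beta n) / Lam n)) sequentially"
    by (rule less_LiminfD)
  then have "eventually (\<lambda>n. norm (exp (-2 * Lam n * x) / (beta n)\<^sup>2) \<le> inverse ((real (Suc n))\<^sup>2))
      sequentially"
  proof (rule eventually_mono)
    fix n
    assume "ereal (A - x) < ereal (ln (beta n) / Lam n)"
    then have "(A - x) * Lam n < ln (beta n)" and "ln (real (Suc n)) \<le> A * Lam n"
      using A[of n] Lam_pos[of n] by (simp_all add: field_simps)
    then have "exp (ln (real (Suc n)) + - Lam n * x) \<le> exp (ln (beta n))"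
      by (simp add: algebra_simps)
    then have "real (Suc n) * exp (- Lam n * x) \<le> beta n"
      using beta_pos[of n] by (simp only: exp_add exp_ln of_nat_0_less_iff zero_less_Suc)
    then have le: "(real (Suc n) * exp (- Lam n * x))\<^sup>2 \<le> (beta n)\<^sup>2"
      by (intro power_mono) auto
    have "exp (-2 * Lam n * x) / (beta n)\<^sup>2 = (exp (- Lam n * x))\<^sup>2 / (beta n)\<^sup>2"
      by (simp add: power2_eq_square flip: exp_add)
    also have "\<dots> \<le> (exp (- Lam n * x))\<^sup>2 / (real (Suc n) * exp (- Lam n * x))\<^sup>2"
      using le beta_pos[of n] by (intro divide_left_mono) (auto intro!: mult_pos_pos)
    also have "\<dots> = inverse ((real (Suc n))\<^sup>2)"
      by (simp add: power_mult_distrib inverse_eq_divide del: of_nat_Suc)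
    finally show "norm (exp (-2 * Lam n * x) / (beta n)\<^sup>2) \<le> inverse ((real (Suc n))\<^sup>2)"
      by simp
  qed
  moreover have "summable (\<lambda>n. inverse ((real (Suc n))\<^sup>2))"
    using inverse_power_summable[of 2, where 'a=real] summable_Suc_iff[of "\<lambda>n. inverse (real n ^ 2)"]
    by simp
  ultimately show ?thesis
    by (rule summable_comparison_test_ev)
qed

lemma K_pos: "K x > 0"
  unfolding K_def using beta_pos
  by (intro suminf_pos summable_K_terms) (auto simp: less_imp_neq[symmetric])

lemma K_antimono: "y \<le> x \<Longrightarrow> K x \<le> K y"
  unfolding K_def
  by (intro suminf_le summable_K_terms divide_right_mono) (auto simp: Lam_pos less_imp_le)

lemma K_shift: "0 \<le> D \<Longrightarrow> exp (2 * Lam 0 * D) * K x \<le> K (x - D)"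
  unfolding K_def
proof (subst suminf_mult[symmetric, OF summable_K_terms],
    intro suminf_le summable_mult summable_K_terms)
  fix n
  assume "0 \<le> D"
  then have "Lam 0 * D \<le> Lam n * D"
    using Lam_ge_Lam0 by (intro mult_right_mono)
  then have "exp (2 * Lam 0 * D) * exp (-2 * Lam n * x) \<le> exp (-2 * Lam n * (x - D))"
    by (simp add: algebra_simps flip: exp_add)
  then show "exp (2 * Lam 0 * D) * (exp (-2 * Lam n * x) / (beta n)\<^sup>2)
      \<le> exp (-2 * Lam n * (x - D)) / (beta n)\<^sup>2"
    using divide_right_mono[OF _ zero_le_power2[of "beta n"]] by simp
qed

lemma norm_dirichlet_term:
  "norm (a n * exp (- of_real (Lam n) * z)) = cmod (a n) * exp (- Lam n * Re z)"
  by (simp add: norm_mult norm_exp_eq_Re)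

lemma coeff_ok_abs_summable:
  assumes ok: "coeff_ok beta a"
  shows "summable (\<lambda>n. cmod (a n) * exp (- Lam n * x))"
    and "(\<Sum>n. cmod (a n) * exp (- Lam n * x))
      \<le> sqrt (\<Sum>n. (cmod (a n))\<^sup>2 * (beta n)\<^sup>2) * sqrt (K x)"
proof -
  let ?u = "\<lambda>n. cmod (a n) * beta n" and ?v = "\<lambda>n. exp (- Lam n * x) / beta n"
  have uv: "?u n * ?v n = cmod (a n) * exp (- Lam n * x)" for n
    using beta_pos[of n] by simp
  have u2: "(?u n)\<^sup>2 = (cmod (a n))\<^sup>2 * (beta n)\<^sup>2" for n
    by (simp add: power_mult_distrib)
  have v2: "(?v n)\<^sup>2 = exp (-2 * Lam n * x) / (beta n)\<^sup>2" for n
    by (simp add: power_divide power2_eq_square flip: exp_add)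
  have su: "summable (\<lambda>n. (?u n)\<^sup>2)"
    using ok unfolding coeff_ok_def u2 .
  have sv: "summable (\<lambda>n. (?v n)\<^sup>2)"
    unfolding v2 by (rule summable_K_terms)
  have u0: "?u n \<ge> 0" and v0: "?v n \<ge> 0" for n
    using beta_pos[of n] by simp_all
  show "summable (\<lambda>n. cmod (a n) * exp (- Lam n * x))"
    using Cauchy_Schwarz_suminf(1)[OF su sv u0 v0] unfolding uv .
  show "(\<Sum>n. cmod (a n) * exp (- Lam n * x))
      \<le> sqrt (\<Sum>n. (cmod (a n))\<^sup>2 * (beta n)\<^sup>2) * sqrt (K x)"
    using Cauchy_Schwarz_suminf(2)[OF su sv u0 v0] unfolding uv u2 v2 K_def .
qed

lemma summable_dirichlet_terms:
  assumes "coeff_ok beta a"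
  shows "summable (\<lambda>n. norm (a n * exp (- of_real (Lam n) * z)))"
    and "summable (\<lambda>n. a n * exp (- of_real (Lam n) * z))"
proof -
  show abs: "summable (\<lambda>n. norm (a n * exp (- of_real (Lam n) * z)))"
    unfolding norm_dirichlet_term by (rule coeff_ok_abs_summable(1)[OF assms])
  show "summable (\<lambda>n. a n * exp (- of_real (Lam n) * z))"
    by (rule summable_norm_cancel[OF abs])
qed

lemma norm_dirichlet_sum_le:
  assumes ok: "coeff_ok beta a"
  shows "cmod (dirichlet_sum Lam a z) \<le> sqrt (\<Sum>n. (cmod (a n))\<^sup>2 * (beta n)\<^sup>2) * sqrt (K (Re z))"
proof -
  have "cmod (dirichlet_sum Lam a z) \<le> (\<Sum>n. norm (a n * exp (- of_real (Lam n) * z)))"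
    unfolding dirichlet_sum_def by (rule summable_norm[OF summable_dirichlet_terms(1)[OF ok]])
  also have "\<dots> \<le> sqrt (\<Sum>n. (cmod (a n))\<^sup>2 * (beta n)\<^sup>2) * sqrt (K (Re z))"
    unfolding norm_dirichlet_term by (rule coeff_ok_abs_summable(2)[OF ok])
  finally show ?thesis .
qed

lemma dirichlet_sum_diff:
  assumes "coeff_ok beta a" "coeff_ok beta b"
  shows "dirichlet_sum Lam (\<lambda>n. a n - b n) z = dirichlet_sum Lam a z - dirichlet_sum Lam b z"
  unfolding dirichlet_sum_def left_diff_distrib
  by (rule suminf_diff[symmetric, OF summable_dirichlet_terms(2)[OF assms(1)] summable_dirichlet_terms(2)[OF assms(2)]])

lemma coeff_ok_diff:
  assumes "coeff_ok beta a" "coeff_ok beta b"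
  shows "coeff_ok beta (\<lambda>n. a n - b n)"
proof -
  have sq_le: "(cmod (a n - b n))\<^sup>2 \<le> 2 * (cmod (a n))\<^sup>2 + 2 * (cmod (b n))\<^sup>2" for n
  proof -
    have "(cmod (a n - b n))\<^sup>2 \<le> (cmod (a n) + cmod (b n))\<^sup>2"
      by (intro power_mono norm_triangle_ineq4) auto
    also have "\<dots> \<le> 2 * (cmod (a n))\<^sup>2 + 2 * (cmod (b n))\<^sup>2"
      using sum_squares_bound[of "cmod (a n)" "cmod (b n)"] by (simp add: power2_eq_square algebra_simps)
    finally show ?thesis .
  qed
  have "norm ((cmod (a n - b n))\<^sup>2 * (beta n)\<^sup>2)
      \<le> 2 * ((cmod (a n))\<^sup>2 * (beta n)\<^sup>2) + 2 * ((cmod (b n))\<^sup>2 * (beta n)\<^sup>2)" for n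
    using mult_right_mono[OF sq_le zero_le_power2[of "beta n"]] by (simp add: algebra_simps)
  moreover have "summable (\<lambda>n. 2 * ((cmod (a n))\<^sup>2 * (beta n)\<^sup>2) + 2 * ((cmod (b n))\<^sup>2 * (beta n)\<^sup>2))"
    using assms unfolding coeff_ok_def by (intro summable_add summable_mult)
  ultimately show ?thesis
    unfolding coeff_ok_def by (rule summable_comparison_test'[rotated])
qed

text \<open>For x \<ge> 1, every term beyond the first nonzero one is bounded through
  exp (- Lam n x) \<le> exp (- Lam n) exp (- Lam (m + 1) (x - 1)).\<close>
lemma dirichlet_sum_leading_term:
  assumes ok: "coeff_ok beta d" and below: "\<And>j. j < m \<Longrightarrow> d j = 0" and x: "1 \<le> x"
  shows "cmod (dirichlet_sum Lam d (of_real x) - d m * exp (- of_real (Lam m) * of_real x))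
    \<le> (\<Sum>n. cmod (d n) * exp (- Lam n * 1)) * exp (- Lam (Suc m) * (x - 1))"
proof -
  define g where "g n = d n * exp (- of_real (Lam n) * complex_of_real x)" for n
  define h where "h = (\<lambda>n. if n = m then 0 else g n)"
  define B where "B n = cmod (d n) * exp (- Lam n * 1) * exp (- Lam (Suc m) * (x - 1))" for n
  have sS: "summable (\<lambda>n. cmod (d n) * exp (- Lam n * 1))"
    by (rule coeff_ok_abs_summable(1)[OF ok])
  have h_sums: "h sums (dirichlet_sum Lam d (of_real x) - g m)"
  proof -
    have "g sums dirichlet_sum Lam d (of_real x)"
      using summable_dirichlet_terms(2)[OF ok] unfolding g_def dirichlet_sum_def
      by (simp add: summable_sums)
    from sums_diff[OF this sums_single[of m g]] show ?thesis
      by (simp add: h_def if_distrib cong: if_cong)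
  qed
  have hB: "norm (h n) \<le> B n" for n
  proof (cases "m < n")
    case True
    then have "Lam (Suc m) * (x - 1) \<le> Lam n * (x - 1)"
      using x Lam_mono by (intro mult_right_mono) (auto simp: strict_mono_less_eq Suc_leI)
    then have "exp (- Lam n * x) \<le> exp (- Lam n * 1) * exp (- Lam (Suc m) * (x - 1))"
      by (simp add: algebra_simps flip: exp_add)
    then show ?thesis
      using True by (simp add: h_def g_def B_def norm_mult norm_exp_eq_Re mult.assoc mult_left_mono)
  next
    case False
    then show ?thesis
      using below[of n] by (cases "n = m") (auto simp: h_def g_def B_def)
  qed
  have sB: "summable B"
    unfolding B_def by (intro summable_mult2 sS)
  have norm_h: "summable (\<lambda>n. norm (h n))"
    by (rule summable_comparison_test'[OF sB]) (simp add: hB)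
  have "norm (dirichlet_sum Lam d (of_real x) - g m) = norm (suminf h)"
    using h_sums by (simp add: sums_iff)
  also have "\<dots> \<le> (\<Sum>n. norm (h n))"
    by (rule summable_norm[OF norm_h])
  also have "\<dots> \<le> suminf B"
    by (rule suminf_le[OF hB norm_h sB])
  also have "suminf B = (\<Sum>n. cmod (d n) * exp (- Lam n * 1)) * exp (- Lam (Suc m) * (x - 1))"
    unfolding B_def by (rule suminf_mult2[symmetric, OF sS])
  finally show ?thesis
    by (simp add: g_def)
qed

lemma dirichlet_coeffs_zero:
  assumes ok: "coeff_ok beta d" and zero: "\<And>x::real. dirichlet_sum Lam d (of_real x) = 0"
  shows "d = (\<lambda>_. 0)"
proof (rule ccontr)
  assume "d \<noteq> (\<lambda>_. 0)"
  then have ex: "\<exists>n. d n \<noteq> 0" by auto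
  define m where "m = (LEAST n. d n \<noteq> 0)"
  have dm: "d m \<noteq> 0"
    unfolding m_def by (rule LeastI_ex[OF ex])
  have below: "d j = 0" if "j < m" for j
    using not_less_Least[of j "\<lambda>n. d n \<noteq> 0"] that unfolding m_def by blast
  define S where "S = (\<Sum>n. cmod (d n) * exp (- Lam n * 1))"
  define \<delta> where "\<delta> = Lam (Suc m) - Lam m"
  have \<delta>_pos: "\<delta> > 0"
    using Lam_mono unfolding \<delta>_def by (simp add: strict_mono_def)
  have ev: "eventually (\<lambda>x. cmod (d m) \<le> S * exp (Lam (Suc m)) * exp (- \<delta> * x)) at_top"
    using eventually_ge_at_top[of 1]
  proof (rule eventually_mono)
    fix x :: real
    assume "1 \<le> x"
    from dirichlet_sum_leading_term[OF ok below this] zero[of x]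
    have "cmod (d m) * exp (- Lam m * x) \<le> S * exp (- Lam (Suc m) * (x - 1))"
      by (simp add: S_def norm_mult norm_exp_eq_Re)
    also have "\<dots> = S * exp (Lam (Suc m)) * exp (- \<delta> * x) * exp (- Lam m * x)"
      by (simp add: \<delta>_def algebra_simps flip: exp_add)
    finally show "cmod (d m) \<le> S * exp (Lam (Suc m)) * exp (- \<delta> * x)"
      by simp
  qed
  have lim: "((\<lambda>x. S * exp (Lam (Suc m)) * exp (- \<delta> * x)) \<longlongrightarrow> 0) at_top"
    using \<delta>_pos
    by (intro tendsto_mult_right_zero filterlim_compose[OF exp_at_bot]
        filterlim_tendsto_neg_mult_at_bot[OF tendsto_const _ filterlim_ident]) simp
  have "cmod (d m) \<le> 0"
    by (rule tendsto_lowerbound[OF lim ev trivial_limit_at_top_linorder])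
  with dm show False by simp
qed

lemma dirichlet_coeffs_unique:
  assumes "coeff_ok beta a" "coeff_ok beta b" "\<And>z. dirichlet_sum Lam a z = dirichlet_sum Lam b z"
  shows "a = b"
proof -
  have "(\<lambda>n. a n - b n) = (\<lambda>_. 0)"
    using assms by (intro dirichlet_coeffs_zero coeff_ok_diff) (simp_all add: dirichlet_sum_diff)
  then show ?thesis
    by (simp add: fun_eq_iff)
qed

lemma HE_coeffs_eq:
  assumes "coeff_ok beta a" "\<And>z. f z = dirichlet_sum Lam a z"
  shows "HE_coeffs Lam beta f = a"
  unfolding HE_coeffs_def
  by (rule the_equality) (use assms dirichlet_coeffs_unique in auto)

lemma HE_point_bound:
  assumes "f \<in> HE Lam beta"
  shows "cmod (f z) \<le> HE_norm Lam beta f * sqrt (K (Re z))"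
proof -
  obtain a where a: "coeff_ok beta a" "\<And>z. f z = dirichlet_sum Lam a z"
    using assms unfolding HE_def by auto
  show ?thesis
    using a(1) unfolding HE_norm_def HE_coeffs_eq[OF a] a(2) by (rule norm_dirichlet_sum_le)
qed

definition kernel_coeffs :: "complex \<Rightarrow> nat \<Rightarrow> complex" where
  "kernel_coeffs u n = exp (- of_real (Lam n) * cnj u) / of_real ((beta n)\<^sup>2)"

lemma kernel_coeffs_sq:
  "(cmod (kernel_coeffs u n))\<^sup>2 * (beta n)\<^sup>2 = exp (-2 * Lam n * Re u) / (beta n)\<^sup>2"
proof -
  have "cmod (kernel_coeffs u n) = exp (- Lam n * Re u) / (beta n)\<^sup>2"
    unfolding kernel_coeffs_def using beta_pos[of n] by (simp add: norm_divide norm_exp_eq_Re norm_power)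
  then have "(cmod (kernel_coeffs u n))\<^sup>2 * (beta n)\<^sup>2 = (exp (- Lam n * Re u))\<^sup>2 / (beta n)\<^sup>2"
    using beta_pos[of n] by (simp add: power2_eq_square)
  also have "(exp (- Lam n * Re u))\<^sup>2 = exp (-2 * Lam n * Re u)"
    by (simp add: power2_eq_square flip: exp_add)
  finally show ?thesis .
qed

lemma kernel_coeffs_ok: "coeff_ok beta (kernel_coeffs u)"
  unfolding coeff_ok_def kernel_coeffs_sq by (rule summable_K_terms)

lemma kernel_in_HE: "dirichlet_sum Lam (kernel_coeffs u) \<in> HE Lam beta"
  unfolding HE_def using kernel_coeffs_ok by auto

lemma HE_norm_kernel: "HE_norm Lam beta (dirichlet_sum Lam (kernel_coeffs u)) = sqrt (K (Re u))"
  unfolding HE_norm_def HE_coeffs_eq[OF kernel_coeffs_ok refl] kernel_coeffs_sq K_def ..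

lemma kernel_at_point: "dirichlet_sum Lam (kernel_coeffs u) u = of_real (K (Re u))"
proof -
  have kernel_term: "kernel_coeffs u n * exp (- of_real (Lam n) * u)
      = of_real (exp (-2 * Lam n * Re u) / (beta n)\<^sup>2)" for n
  proof -
    have "kernel_coeffs u n * exp (- of_real (Lam n) * u)
        = exp (- of_real (Lam n) * (cnj u + u)) / of_real ((beta n)\<^sup>2)"
      by (simp add: kernel_coeffs_def distrib_left flip: exp_add)
    also have "cnj u + u = of_real (2 * Re u)"
      using complex_add_cnj[of u] by (simp add: add.commute)
    finally show ?thesis
      by (simp add: exp_of_real flip: of_real_mult of_real_minus)
  qed
  show ?thesis
    unfolding dirichlet_sum_def kernel_term K_def by (rule suminf_of_real[OF summable_K_terms, symmetric])
qed

lemma exp_monomial_in_HE: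
  assumes "\<And>z. f z = c * exp (- of_real (Lam k) * z)"
  shows "f \<in> HE Lam beta" and "HE_norm Lam beta f = cmod c * beta k"
proof -
  define a where "a n = (if n = k then c else 0)" for n
  have "(\<lambda>n. (cmod (a n))\<^sup>2 * (beta n)\<^sup>2) = (\<lambda>n. if n = k then (cmod c)\<^sup>2 * (beta k)\<^sup>2 else 0)"
    by (auto simp: a_def)
  then have sq: "(\<lambda>n. (cmod (a n))\<^sup>2 * (beta n)\<^sup>2) sums ((cmod c)\<^sup>2 * (beta k)\<^sup>2)"
    using sums_single[of k "\<lambda>_. (cmod c)\<^sup>2 * (beta k)\<^sup>2"] by simp
  then have ok: "coeff_ok beta a"
    unfolding coeff_ok_def by (rule sums_summable)
  have "f z = dirichlet_sum Lam a z" for z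
  proof -
    have "(\<lambda>n. a n * exp (- of_real (Lam n) * z)) = (\<lambda>n. if n = k then f z else 0)"
      by (auto simp: a_def assms)
    then show ?thesis
      using sums_single[of k "\<lambda>_. f z"] by (simp add: dirichlet_sum_def sums_iff)
  qed
  then show "f \<in> HE Lam beta" and "HE_norm Lam beta f = cmod c * beta k"
    using ok sq beta_pos[of k] unfolding HE_def HE_norm_def
    by (auto simp: HE_coeffs_eq sums_iff real_sqrt_mult)
qed

lemma comp_kernel_bound:
  assumes maps: "\<And>f. f \<in> HE Lam beta \<Longrightarrow> f \<circ> phi \<in> HE Lam beta"
    and bounded: "\<And>f. f \<in> HE Lam beta \<Longrightarrow> HE_norm Lam beta (f \<circ> phi) \<le> C * HE_norm Lam beta f"
  shows "sqrt (K (Re (phi w))) \<le> C * sqrt (K (Re w))"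
proof -
  let ?u = "phi w"
  let ?f = "dirichlet_sum Lam (kernel_coeffs ?u)"
  have "sqrt (K (Re ?u)) * sqrt (K (Re ?u)) = cmod ((?f \<circ> phi) w)"
    using kernel_at_point[of ?u] K_pos[of "Re ?u"] by simp
  also have "\<dots> \<le> HE_norm Lam beta (?f \<circ> phi) * sqrt (K (Re w))"
    by (rule HE_point_bound[OF maps[OF kernel_in_HE]])
  also have "\<dots> \<le> C * sqrt (K (Re ?u)) * sqrt (K (Re w))"
    using bounded[OF kernel_in_HE] by (intro mult_right_mono) (simp_all add: HE_norm_kernel K_pos less_imp_le)
  finally have "sqrt (K (Re ?u)) * sqrt (K (Re ?u)) \<le> C * sqrt (K (Re w)) * sqrt (K (Re ?u))"
    by (simp only: mult_ac)
  then show ?thesis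
    by (rule mult_right_le_imp_le) (simp add: K_pos)
qed

lemma Re_comp_lower_bound:
  assumes bound: "\<And>w. sqrt (K (Re (phi w))) \<le> C * sqrt (K (Re w))"
  shows "\<exists>D. \<forall>w. Re w - D \<le> Re (phi w)"
proof -
  define D where "D = ln (C\<^sup>2 + 1) / (2 * Lam 0)"
  have D_nonneg: "0 \<le> D" and exp_D: "exp (2 * Lam 0 * D) = C\<^sup>2 + 1"
    using Lam0_pos by (simp_all add: D_def add_pos_nonneg add_nonneg_pos)
  have "Re w - D \<le> Re (phi w)" for w
  proof (rule ccontr)
    assume "\<not> Re w - D \<le> Re (phi w)"
    then have "(C\<^sup>2 + 1) * K (Re w) \<le> K (Re (phi w))"
      using K_shift[OF D_nonneg, of "Re w"] K_antimono[of "Re (phi w)" "Re w - D"] exp_D by simp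
    also have "\<dots> \<le> C\<^sup>2 * K (Re w)"
      using power_mono[OF bound[of w], of 2] less_imp_le[OF K_pos] by (simp add: power_mult_distrib)
    finally show False
      using K_pos[of "Re w"] by simp
  qed
  then show ?thesis by blast
qed

lemma translation_multiplier_bound:
  assumes shift: "\<And>z. phi z = z + b"
    and bounded: "\<And>f. f \<in> HE Lam beta \<Longrightarrow> HE_norm Lam beta (f \<circ> phi) \<le> C * HE_norm Lam beta f"
  shows "exp (- Lam k * Re b) \<le> C"
proof -
  define f :: "complex \<Rightarrow> complex" where "f z = 1 * exp (- of_real (Lam k) * z)" for z
  have "(f \<circ> phi) z = exp (- of_real (Lam k) * b) * exp (- of_real (Lam k) * z)" for z
    by (simp add: f_def shift algebra_simps flip: exp_add)
  then have "cmod (exp (- of_real (Lam k) * b)) * beta k \<le> C * beta k"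
    using bounded[of f] exp_monomial_in_HE[of f 1 k] exp_monomial_in_HE(2)[of "f \<circ> phi"]
    by (simp add: f_def)
  then show ?thesis
    using beta_pos[of k] by (simp add: norm_exp_eq_Re)
qed

end

theorem proposition4p4:
  fixes Lam beta :: "nat \<Rightarrow> real" and phi :: "complex \<Rightarrow> complex"
  assumes Lam_nonneg: "0 \<le> Lam 0"
    and Lam_mono: "strict_mono Lam"
    and Lam_lim: "filterlim Lam at_top sequentially"
    and Lam_growth: "limsup (\<lambda>n. ereal (ln (real (Suc n)) / Lam n)) < \<infinity>"
    and Lam_pos: "Lam 0 > 0"
    and beta_pos: "\<And>n. beta n > 0"
    and condE: "liminf (\<lambda>n. ereal (ln (beta n) / Lam n)) = \<infinity>"
    and phi_entire: "phi holomorphic_on UNIV"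
    and bdd: "bounded_comp_op Lam beta phi"
  shows "\<exists>b. Re b \<ge> 0 \<and> (\<forall>z. phi z = z + b)"
proof -
  interpret dirichlet_space Lam beta
    using Lam_pos Lam_mono Lam_growth beta_pos condE by unfold_locales
  obtain C where
    maps: "\<And>f. f \<in> HE Lam beta \<Longrightarrow> f \<circ> phi \<in> HE Lam beta" and
    bounded: "\<And>f. f \<in> HE Lam beta \<Longrightarrow> HE_norm Lam beta (f \<circ> phi) \<le> C * HE_norm Lam beta f"
    using bdd unfolding bounded_comp_op_def by blast
  obtain D where "\<And>w. Re w - D \<le> Re (phi w)"
    using Re_comp_lower_bound[OF comp_kernel_bound[OF maps bounded]] by blast
  then obtain b where shift: "\<And>z. phi z = z + b"
    using entire_eq_translation_if_Re_bounded_below[OF phi_entire] by blast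
  have "Re b \<ge> 0"
    using Re_nonneg_if_exp_bounded[OF Lam_lim translation_multiplier_bound[OF shift bounded]] .
  with shift show ?thesis by blast
qed

end
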